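(* Let $d\geq1$ be an integer and $n>d/2$ real. For all $k\in\mathbb R^d$, $$\frac{(1+|k|^2)^n}{(2\pi)^d}\,(G_{nd}\ast G_{nd})(k)=\mathscr S_{nd}\Big(\frac{|k|^2}{4}\Big),$$ where $G_{nd}(k):=(1+|k|^2)^{-n}$, $(F\ast G)(k):=\int_{\mathbb R^d}F(k-h)G(h)\,dh$, and $$\mathscr S_{nd}(u):=\frac{\Gamma(2n-d/2)}{(4\pi)^{d/2}\Gamma(2n)}(1+4u)^n\,F\!\left(2n-\tfrac d2,\,n,\,n+\tfrac12;\,-u\right),\qquad u\geq0.$$
   Context: $F(\alpha,\beta,\gamma;w)$ denotes the Gauss hypergeometric function ${}_2F_1$ and $\Gamma$ the Gamma function. *)

theory Defs
  imports "HOL-Analysis.Analysis"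
begin

definition hyp2F1_series :: "complex \<Rightarrow> complex \<Rightarrow> complex \<Rightarrow> complex \<Rightarrow> complex" where
  "hyp2F1_series a b c z =
     (\<Sum>j. pochhammer a j * pochhammer b j / (pochhammer c j * fact j) * z ^ j)"

definition cut_plane :: "complex set" where
  "cut_plane = UNIV - {z. Im z = 0 \<and> 1 \<le> Re z}"

text \<open>Gauss hypergeometric function 2F1: the (unique) analytic continuation of the
  series from the unit disc to the cut plane.\<close>
definition hyp2F1 :: "complex \<Rightarrow> complex \<Rightarrow> complex \<Rightarrow> complex \<Rightarrow> complex" where
  "hyp2F1 a b c z =
     (THE v. \<exists>f. f holomorphic_on cut_plane \<and>
                 (\<forall>w. norm w < 1 \<longrightarrow> f w = hyp2F1_series a b c w) \<and> f z = v)"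

definition G_nd :: "real \<Rightarrow> real ^ 'd \<Rightarrow> real" where
  "G_nd n k = (1 + norm k ^ 2) powr (- n)"

definition conv :: "(real ^ 'd \<Rightarrow> real) \<Rightarrow> (real ^ 'd \<Rightarrow> real) \<Rightarrow> real ^ 'd \<Rightarrow> real" where
  "conv F G k = (\<integral>h. F (k - h) * G h \<partial>lborel)"

definition S_nd :: "real \<Rightarrow> nat \<Rightarrow> real \<Rightarrow> complex" where
  "S_nd n d u =
     complex_of_real (Gamma (2*n - real d / 2) / ((4*pi) powr (real d / 2) * Gamma (2*n))
                      * (1 + 4*u) powr n)
     * hyp2F1 (of_real (2*n - real d / 2)) (of_real n) (of_real (n + 1/2)) (of_real (- u))"

end

theory Submission
  imports Defs "HOL-Complex_Analysis.Complex_Analysis" "HOL-Probability.Distributions"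
begin

(* Feynman's parametrisation
     A^(-n) B^(-n) = Beta(n,n)^(-1) * int_0^1 t^(n-1) (1-t)^(n-1) (t A + (1-t) B)^(-2n) dt
   with A = 1 + |k-h|^2 and B = 1 + |h|^2, the identity
     t A + (1-t) B = 1 + t(1-t) |k|^2 + |h - t k|^2
   and Fubini reduce the convolution to the radial integral
     int (c + |h|^2)^(-s) dh = pi^(d/2) Gamma(s - d/2) / Gamma(s) * c^(d/2 - s),
   which follows by writing c^(-s) as a Gamma integral and integrating a Gaussian.
   The substitution t = (1 - cos u)/2 turns what is left into
     int_0^pi sin^(2n-1) u * (1 + |k|^2 sin^2 u / 4)^(-(2n - d/2)) du.
   Divided by int_0^pi sin^(2n-1) u du, this Euler-type integral is
   F(2n - d/2, n, n + 1/2; -|k|^2/4): on the unit disc by integrating the binomial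
   series termwise, the moments of sin^2 obeying Wallis' recurrence, and on the
   cut plane by analytic continuation. *)

section \<open>Analytic continuation to the cut plane\<close>

lemma open_cut_plane: "open cut_plane"
proof -
  have "closed {z::complex. Im z = 0 \<and> 1 \<le> Re z}"
    by (intro closed_Collect_conj closed_Collect_eq closed_Collect_le continuous_intros)
  then show ?thesis
    unfolding cut_plane_def by (simp add: open_Diff)
qed

lemma scaleR_in_cut_plane:
  assumes "z \<in> cut_plane" "0 \<le> s" "s \<le> 1"
  shows "s *\<^sub>R z \<in> cut_plane"
proof (rule ccontr)
  assume "s *\<^sub>R z \<notin> cut_plane"
  then have "s * Im z = 0" "1 \<le> s * Re z"
    by (auto simp: cut_plane_def)
  moreover from this have "s > 0" "Re z > 0"
    using assms(2) zero_less_mult_iff[of s "Re z"] by auto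
  moreover from this have "s * Re z \<le> Re z"
    using assms(3) by (simp add: mult_left_le_one_le)
  ultimately show False
    using assms(1) by (auto simp: cut_plane_def)
qed

lemma connected_cut_plane: "connected cut_plane"
proof (rule starlike_imp_connected)
  have "0 \<in> cut_plane"
    by (simp add: cut_plane_def)
  moreover have "closed_segment 0 z \<subseteq> cut_plane" if "z \<in> cut_plane" for z
    using scaleR_in_cut_plane[OF that] by (auto simp: closed_segment_def)
  ultimately show "starlike cut_plane"
    unfolding starlike_def by blast
qed

lemma ball_subset_cut_plane: "ball 0 1 \<subseteq> cut_plane"
proof
  fix z :: complex
  assume "z \<in> ball 0 1"
  then have "Re z < 1"
    using complex_Re_le_cmod[of z] by simp
  then show "z \<in> cut_plane"
    by (simp add: cut_plane_def)
qed

lemma one_minus_notin_nonpos_Reals: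
  assumes "z \<in> cut_plane" "0 \<le> s" "s \<le> 1"
  shows "1 - z * of_real s \<notin> \<real>\<^sub>\<le>\<^sub>0"
proof
  assume "1 - z * of_real s \<in> \<real>\<^sub>\<le>\<^sub>0"
  then have "s *\<^sub>R z \<notin> cut_plane"
    by (auto simp: cut_plane_def complex_nonpos_Reals_iff mult.commute)
  with scaleR_in_cut_plane[OF assms] show False
    by contradiction
qed

lemma hyp2F1_eqI:
  assumes holo: "f holomorphic_on cut_plane"
    and series: "\<And>w. norm w < 1 \<Longrightarrow> f w = hyp2F1_series a b c w"
    and z: "z \<in> cut_plane"
  shows "hyp2F1 a b c z = f z"
  unfolding hyp2F1_def
proof (rule the_equality)
  show "\<exists>g. g holomorphic_on cut_plane \<and> (\<forall>w. norm w < 1 \<longrightarrow> g w = hyp2F1_series a b c w) \<and> g z = f z"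
    using holo series by blast
next
  fix v assume "\<exists>g. g holomorphic_on cut_plane \<and> (\<forall>w. norm w < 1 \<longrightarrow> g w = hyp2F1_series a b c w) \<and> g z = v"
  then obtain g where g: "g holomorphic_on cut_plane" "\<And>w. norm w < 1 \<Longrightarrow> g w = hyp2F1_series a b c w" "g z = v"
    by blast
  have "g z = f z"
    by (rule analytic_continuation_open[of "ball 0 1" cut_plane])
       (use g holo series z open_cut_plane connected_cut_plane ball_subset_cut_plane in auto)
  with g(3) show "v = f z"
    by simp
qed

section \<open>Integrals of powers of sine\<close>

definition sin_power_integral :: "real \<Rightarrow> real" where
  "sin_power_integral q = integral {0..pi} (\<lambda>t. sin t powr q)"

lemma continuous_on_sin_powr: "q > 0 \<Longrightarrow> continuous_on {0..pi} (\<lambda>t. sin t powr q)"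
  by (intro continuous_on_powr' continuous_intros) (auto simp: sin_ge_zero)

lemma has_integral_sin_power_integral:
  "q > 0 \<Longrightarrow> ((\<lambda>t. sin t powr q) has_integral sin_power_integral q) {0..pi}"
  unfolding sin_power_integral_def
  using continuous_on_sin_powr integrable_continuous_interval by blast

lemma sin_power_integral_rec:
  assumes q: "q > 0"
  shows "(q + 2) * sin_power_integral (q + 2) = (q + 1) * sin_power_integral q"
proof -
  define F where "F t = sin t powr (q + 1) * cos t" for t
  define F' where "F' t = (q + 1) * sin t powr q - (q + 2) * sin t powr (q + 2)" for t
  have "(F' has_integral F pi - F 0) {0..pi}"
  proof (rule fundamental_theorem_of_calculus_interior)
    show "continuous_on {0..pi} F"
      unfolding F_def using q by (intro continuous_intros continuous_on_sin_powr) auto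
    fix t assume "t \<in> {0<..<pi}"
    then have s: "sin t > 0"
      by (auto intro: sin_gt_zero)
    have pow: "sin t powr (q + 1) = sin t powr q * sin t" "sin t powr (q + 2) = sin t powr q * (sin t)\<^sup>2"
      using s by (simp_all add: powr_add)
    have "(F has_real_derivative (q + 1) * sin t powr q * (cos t)\<^sup>2 - sin t powr (q + 1) * sin t) (at t)"
      unfolding F_def using s by (auto intro!: derivative_eq_intros simp: power2_eq_square)
    also have "(q + 1) * sin t powr q * (cos t)\<^sup>2 - sin t powr (q + 1) * sin t = F' t"
      unfolding F'_def cos_squared_eq pow by (simp add: algebra_simps power2_eq_square)
    finally show "(F has_vector_derivative F' t) (at t)"
      by (simp add: has_real_derivative_iff_has_vector_derivative)
  qed (use pi_ge_zero in auto)
  then have "(F' has_integral 0) {0..pi}"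
    by (simp add: F_def)
  moreover have "(F' has_integral (q + 1) * sin_power_integral q - (q + 2) * sin_power_integral (q + 2)) {0..pi}"
    unfolding F'_def using q
    by (intro has_integral_diff has_integral_mult_right has_integral_sin_power_integral) auto
  ultimately have "0 = (q + 1) * sin_power_integral q - (q + 2) * sin_power_integral (q + 2)"
    by (rule has_integral_unique)
  then show ?thesis
    by simp
qed

lemma sin_power_integral_pochhammer:
  assumes p: "p > 1/2"
  shows "sin_power_integral (2*p - 1 + 2 * real j)
           = sin_power_integral (2*p - 1) * pochhammer p j / pochhammer (p + 1/2) j"
proof (induction j)
  case (Suc j)
  have "(2*p - 1 + 2 * real j + 2) * sin_power_integral (2*p - 1 + 2 * real j + 2)
      = (2*p - 1 + 2 * real j + 1) * sin_power_integral (2*p - 1 + 2 * real j)"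
    using p by (intro sin_power_integral_rec) auto
  then have "sin_power_integral (2*p - 1 + 2 * real (Suc j))
      = (p + j) / (p + 1/2 + j) * sin_power_integral (2*p - 1 + 2 * real j)"
    using p by (simp add: field_simps)
  also have "\<dots> = sin_power_integral (2*p - 1) * pochhammer p (Suc j) / pochhammer (p + 1/2) (Suc j)"
  proof -
    have "pochhammer (p + 1/2) j > 0"
      using p by (intro pochhammer_pos) auto
    then show ?thesis
      using p unfolding Suc by (simp add: pochhammer_rec' field_simps)
  qed
  finally show ?case .
qed simp

lemma powr_half_square_mult_half:
  fixes s :: real
  assumes "s \<ge> 0"
  shows "((s / 2)\<^sup>2) powr (p - 1) * (s / 2) = 2 powr (1 - 2*p) * s powr (2*p - 1)"
proof (cases "s = 0")
  case False
  with assms have "s / 2 > 0"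
    by simp
  then have "((s / 2)\<^sup>2) powr (p - 1) * (s / 2) = (s / 2) powr (2*p - 2) * (s / 2) powr 1"
    by (simp add: powr_powr flip: powr_numeral)
  also have "\<dots> = (s / 2) powr (2*p - 2 + 1)"
    by (simp only: powr_add)
  also have "\<dots> = (s / 2) powr (2*p - 1)"
    by simp
  also have "\<dots> = s powr (2*p - 1) / 2 powr (2*p - 1)"
    using assms by (simp add: powr_divide)
  also have "\<dots> = 2 powr (1 - 2*p) * s powr (2*p - 1)"
    using powr_minus_divide[of 2 "2*p - 1"] by simp
  finally show ?thesis .
qed simp \<comment> \<open>for \<open>s = 0\<close> both sides vanish, as \<open>0 powr a = 0\<close> for every \<open>a\<close>\<close>

lemma nn_integral_sin_substitution:
  fixes \<phi> :: "real \<Rightarrow> real"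
  assumes [measurable]: "\<phi> \<in> borel_measurable borel"
  shows "(\<integral>\<^sup>+t. ennreal (indicator {0..1} t * (t * (1 - t)) powr (p - 1) * \<phi> (t * (1 - t))) \<partial>lborel)
       = ennreal (2 powr (1 - 2*p))
         * (\<integral>\<^sup>+\<theta>. ennreal (indicator {0..pi} \<theta> * sin \<theta> powr (2*p - 1) * \<phi> ((sin \<theta>)\<^sup>2 / 4)) \<partial>lborel)"
proof -
  define f where "f x = (x * (1 - x)) powr (p - 1) * \<phi> (x * (1 - x))" for x
  define g where "g (\<theta>::real) = (1 - cos \<theta>) / 2" for \<theta>
  have g_sq: "g \<theta> * (1 - g \<theta>) = (sin \<theta> / 2)\<^sup>2" for \<theta>
  proof -
    have "g \<theta> * (1 - g \<theta>) = (1 - (cos \<theta>)\<^sup>2) / 4"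
      by (simp add: g_def field_simps power2_eq_square)
    then show ?thesis
      by (simp add: sin_squared_eq power_divide)
  qed
  have g: "g 0 = 0" "g pi = 1"
    by (simp_all add: g_def)
  have "(\<integral>\<^sup>+x. ennreal (f x * indicator {g 0..g pi} x) \<partial>lborel)
      = (\<integral>\<^sup>+\<theta>. ennreal (f (g \<theta>) * (sin \<theta> / 2) * indicator {0..pi} \<theta>) \<partial>lborel)"
    by (rule nn_integral_substitution)
       (auto simp: f_def g_def set_borel_measurable_def sin_ge_zero intro!: derivative_eq_intros continuous_intros)
  also have "\<dots> = (\<integral>\<^sup>+\<theta>. ennreal (2 powr (1 - 2*p))
      * ennreal (indicator {0..pi} \<theta> * sin \<theta> powr (2*p - 1) * \<phi> ((sin \<theta>)\<^sup>2 / 4)) \<partial>lborel)"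
  proof (intro nn_integral_cong)
    fix \<theta> :: real
    have "f (g \<theta>) * (sin \<theta> / 2) = 2 powr (1 - 2*p) * sin \<theta> powr (2*p - 1) * \<phi> ((sin \<theta>)\<^sup>2 / 4)"
      if "\<theta> \<in> {0..pi}"
      using powr_half_square_mult_half[of "sin \<theta>" p] sin_ge_zero[of \<theta>] that
      by (simp add: f_def g_sq power_divide mult_ac)
    then show "ennreal (f (g \<theta>) * (sin \<theta> / 2) * indicator {0..pi} \<theta>) = ennreal (2 powr (1 - 2*p))
        * ennreal (indicator {0..pi} \<theta> * sin \<theta> powr (2*p - 1) * \<phi> ((sin \<theta>)\<^sup>2 / 4))"
      by (cases "\<theta> \<in> {0..pi}") (simp_all add: ennreal_mult' mult_ac)
  qed
  also have "\<dots> = ennreal (2 powr (1 - 2*p))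
      * (\<integral>\<^sup>+\<theta>. ennreal (indicator {0..pi} \<theta> * sin \<theta> powr (2*p - 1) * \<phi> ((sin \<theta>)\<^sup>2 / 4)) \<partial>lborel)"
    by (rule nn_integral_cmult) simp
  finally show ?thesis
    unfolding g f_def by (simp add: mult_ac)
qed

lemma Beta_eq_sin_power_integral:
  assumes p: "p > 1/2"
  shows "Beta p p = 2 powr (1 - 2*p) * sin_power_integral (2*p - 1)"
proof -
  have nonneg: "sin_power_integral (2*p - 1) \<ge> 0"
    using p by (intro has_integral_nonneg[OF has_integral_sin_power_integral]) auto
  have "ennreal (Beta p p) = (\<integral>\<^sup>+t. ennreal (indicator {0..1} t * (t powr (p - 1) * (1 - t) powr (p - 1))) \<partial>lborel)"
    using p by (intro nn_integral_has_integral_lebesgue[symmetric] has_integral_Beta_real) auto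
  also have "\<dots> = (\<integral>\<^sup>+t. ennreal (indicator {0..1} t * (t * (1 - t)) powr (p - 1) * 1) \<partial>lborel)"
    by (intro nn_integral_cong) (simp add: indicator_def powr_mult)
  also have "\<dots> = ennreal (2 powr (1 - 2*p)) * (\<integral>\<^sup>+\<theta>. ennreal (indicator {0..pi} \<theta> * sin \<theta> powr (2*p - 1)) \<partial>lborel)"
    using nn_integral_sin_substitution[of "\<lambda>_. 1" p] by simp
  also have "\<dots> = ennreal (2 powr (1 - 2*p) * sin_power_integral (2*p - 1))"
    using p nonneg has_integral_sin_power_integral[of "2*p - 1"]
    by (subst nn_integral_has_integral_lebesgue) (auto simp: ennreal_mult)
  finally show ?thesis
    using p nonneg by (subst (asm) ennreal_inj) (auto simp: Beta_def)
qed

lemma sin_power_integral_pos: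
  assumes "p > 1/2"
  shows "sin_power_integral (2*p - 1) > 0"
proof -
  have "Beta p p > 0"
    using assms by (simp add: Beta_def)
  then show ?thesis
    using Beta_eq_sin_power_integral[OF assms] by (simp add: zero_less_mult_iff)
qed

section \<open>Euler integral representation of the hypergeometric function\<close>

definition euler_integral :: "real \<Rightarrow> real \<Rightarrow> complex \<Rightarrow> complex" where
  "euler_integral p a z = integral {0..pi}
     (\<lambda>t. of_real (sin t powr (2*p - 1)) * (1 - z * of_real ((sin t)\<^sup>2)) powr of_real (- a))"

lemma continuous_on_euler_kernel:
  "continuous_on (cut_plane \<times> UNIV) (\<lambda>(z, t). (1 - z * of_real ((sin t)\<^sup>2)) powr e)"
proof (intro continuous_at_imp_continuous_on ballI)
  fix x :: "complex \<times> real"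
  assume "x \<in> cut_plane \<times> UNIV"
  then have "1 - fst x * of_real ((sin (snd x))\<^sup>2) \<notin> \<real>\<^sub>\<le>\<^sub>0"
    by (intro one_minus_notin_nonpos_Reals) (auto simp: abs_square_le_1)
  then show "isCont (\<lambda>(z, t). (1 - z * of_real ((sin t)\<^sup>2)) powr e) x"
    unfolding case_prod_unfold by (intro isCont_powr_complex continuous_intros)
qed

lemma continuous_on_euler_integrand:
  assumes "p > 1/2" "z \<in> cut_plane"
  shows "continuous_on {0..pi}
           (\<lambda>t. of_real (sin t powr (2*p - 1)) * (1 - z * of_real ((sin t)\<^sup>2)) powr of_real (- a))"
proof (rule continuous_on_mult[OF continuous_on_of_real[OF continuous_on_sin_powr]])
  have "continuous_on {0..pi} (\<lambda>t. (z, t))"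
    by (intro continuous_intros)
  then show "continuous_on {0..pi} (\<lambda>t. (1 - z * of_real ((sin t)\<^sup>2)) powr of_real (- a))"
    using continuous_on_compose2[OF continuous_on_euler_kernel[of "of_real (- a)"]] assms(2) by force
qed (use assms(1) in auto)

lemma holomorphic_euler_integral:
  assumes p: "p > 1/2"
  shows "euler_integral p a holomorphic_on cut_plane"
proof -
  define f where "f = (\<lambda>(z::complex) (t::real).
    of_real (sin t powr (2*p - 1)) * (1 - z * of_real ((sin t)\<^sup>2)) powr of_real (- a))"
  define f' where "f' = (\<lambda>(z::complex) (t::real). of_real (sin t powr (2*p - 1))
    * (of_real (- a) * (1 - z * of_real ((sin t)\<^sup>2)) powr (of_real (- a) - 1) * (- of_real ((sin t)\<^sup>2))))"
  show ?thesis
    unfolding holomorphic_on_def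
  proof
    fix z0 assume "z0 \<in> cut_plane"
    then obtain r where r: "r > 0" "ball z0 r \<subseteq> cut_plane"
      using open_cut_plane open_contains_ball by blast
    have "((\<lambda>z. integral (cbox 0 pi) (f z)) has_field_derivative integral (cbox 0 pi) (f' z0))
          (at z0 within ball z0 r)"
    proof (rule leibniz_rule_field_derivative)
      fix z t assume "z \<in> ball z0 r"
      then have "1 - z * of_real ((sin t)\<^sup>2) \<notin> \<real>\<^sub>\<le>\<^sub>0"
        using r by (intro one_minus_notin_nonpos_Reals) (auto simp: abs_square_le_1)
      then show "((\<lambda>z. f z t) has_field_derivative f' z t) (at z within ball z0 r)"
        unfolding f_def f'_def by (auto intro!: derivative_eq_intros)
    next
      fix z assume "z \<in> ball z0 r"
      then show "f z integrable_on cbox 0 pi"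
        unfolding f_def cbox_interval using r p
        by (intro integrable_continuous_interval continuous_on_euler_integrand) auto
    next
      have kernel: "continuous_on (ball z0 r \<times> cbox 0 pi)
              (\<lambda>(z, t). (1 - z * of_real ((sin t)\<^sup>2)) powr (of_real (- a) - 1))"
        by (rule continuous_on_subset[OF continuous_on_euler_kernel]) (use r in auto)
      have sin_powr: "continuous_on (ball z0 r \<times> cbox 0 pi) (\<lambda>x. complex_of_real (sin (snd x) powr (2*p - 1)))"
        using p by (intro continuous_on_of_real continuous_on_compose2[OF continuous_on_sin_powr]
            continuous_intros) auto
      show "continuous_on (ball z0 r \<times> cbox 0 pi) (\<lambda>(z, t). f' z t)"
        unfolding f'_def case_prod_unfold
        by (intro sin_powr kernel[unfolded case_prod_unfold] continuous_on_mult continuous_intros)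
    qed (use r in auto)
    then have "euler_integral p a field_differentiable at z0"
      using r unfolding euler_integral_def f_def field_differentiable_def cbox_interval
      by (auto simp: at_within_open[OF _ open_ball])
    then show "euler_integral p a field_differentiable at z0 within cut_plane"
      using field_differentiable_at_within by blast
  qed
qed

lemma sums_integral_Weierstrass:
  fixes g :: "nat \<Rightarrow> real \<Rightarrow> 'a::banach"
  assumes cont: "\<And>j. continuous_on {a..b} (g j)"
    and int: "\<And>j. (g j has_integral I j) {a..b}"
    and bound: "\<And>j t. t \<in> {a..b} \<Longrightarrow> norm (g j t) \<le> M j"
    and "summable M"
  shows "I sums integral {a..b} (\<lambda>t. \<Sum>j. g j t)"
proof -
  have "uniform_limit {a..b} (\<lambda>n t. \<Sum>j<n. g j t) (\<lambda>t. \<Sum>j. g j t) sequentially"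
    using bound \<open>summable M\<close> by (rule Weierstrass_m_test)
  then obtain S J where S: "\<And>n. ((\<lambda>t. \<Sum>j<n. g j t) has_integral S n) {a..b}"
    and J: "((\<lambda>t. \<Sum>j. g j t) has_integral J) {a..b}" and "S \<longlonglongrightarrow> J"
    by (rule uniform_limit_integral) (auto intro!: continuous_on_sum cont)
  moreover have "S = (\<lambda>n. \<Sum>j<n. I j)"
    using has_integral_unique[OF S has_integral_sum[OF _ int]] by auto
  ultimately show ?thesis
    unfolding sums_def using integral_unique[OF J] by simp
qed

lemma pochhammer_binomial_sums:
  fixes w :: complex
  assumes "norm w < 1"
  shows "(\<lambda>j. of_real (pochhammer a j / fact j) * w ^ j) sums (1 - w) powr of_real (- a)"
proof -
  have "(\<lambda>j. (of_real (- a) gchoose j) * (- w) ^ j) sums (1 - w) powr of_real (- a)"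
    using gen_binomial_complex[of "- w"] assms by simp
  moreover have "(of_real (- a) gchoose j) * (- w) ^ j = of_real (pochhammer a j / fact j) * w ^ j" for j
  proof -
    have "(of_real (- a) gchoose j) * (- w) ^ j
        = ((- 1) ^ j * (- 1) ^ j) * (pochhammer (of_real a) j / fact j * w ^ j)"
      by (simp add: gbinomial_pochhammer power_minus[of w])
    also have "\<dots> = of_real (pochhammer a j / fact j) * w ^ j"
      by (simp add: pochhammer_of_real flip: power_mult_distrib)
    finally show ?thesis .
  qed
  ultimately show ?thesis
    by simp
qed

lemma summable_norm_pochhammer_power:
  fixes z :: complex
  assumes z: "norm z < 1"
  shows "summable (\<lambda>j. norm (of_real (pochhammer a j / fact j) * z ^ j))"
proof -
  define r where "r = (1 + norm z) / 2"
  have r: "norm z < r" "r < 1" "r > 0"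
    using z by (auto simp: r_def add_pos_nonneg)
  show ?thesis
  proof (rule powser_insidea)
    show "summable (\<lambda>j. of_real (pochhammer a j / fact j) * complex_of_real r ^ j)"
      using r by (intro sums_summable[OF pochhammer_binomial_sums]) simp
  qed (use r in auto)
qed

lemma sin_powr_add_sin_sq_power:
  assumes "t \<in> {0..pi}"
  shows "sin t powr q * ((sin t)\<^sup>2) ^ j = sin t powr (q + 2 * real j)"
proof (cases "sin t = 0")
  case False
  moreover have "sin t \<ge> 0"
    using assms by (simp add: sin_ge_zero)
  ultimately have "sin t > 0"
    by simp
  then show ?thesis
    using powr_realpow[of "sin t" "2 * j"] by (simp add: powr_add power_mult[symmetric])
qed (simp add: power_0_left)

lemma euler_integral_sums:
  assumes p: "p > 1/2" and z: "norm z < 1"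
  shows "(\<lambda>j. of_real (pochhammer a j / fact j * sin_power_integral (2*p - 1 + 2 * real j)) * z ^ j)
           sums euler_integral p a z"
proof -
  define c where "c j = (of_real (pochhammer a j / fact j) :: complex)" for j
  define g where "g j t = of_real (sin t powr (2*p - 1)) * (c j * (z * of_real ((sin t)\<^sup>2)) ^ j)" for j t
  have "summable (\<lambda>j. norm (c j * z ^ j))"
    unfolding c_def using z by (rule summable_norm_pochhammer_power)
  then have "(\<lambda>j. of_real (pochhammer a j / fact j * sin_power_integral (2*p - 1 + 2 * real j)) * z ^ j)
      sums integral {0..pi} (\<lambda>t. \<Sum>j. g j t)"
  proof (rule sums_integral_Weierstrass[rotated 3])
    fix j
    show "continuous_on {0..pi} (g j)"
      unfolding g_def using p by (intro continuous_intros continuous_on_of_real continuous_on_sin_powr) auto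
    have eq: "g j t = of_real (pochhammer a j / fact j * sin t powr (2*p - 1 + 2 * real j)) * z ^ j"
      if "t \<in> {0..pi}" for t
      using sin_powr_add_sin_sq_power[OF that, of "2*p - 1" j]
      by (simp add: g_def c_def power_mult_distrib mult_ac flip: of_real_mult of_real_power)
    have "((\<lambda>t. of_real (pochhammer a j / fact j * sin t powr (2*p - 1 + 2 * real j)) * z ^ j)
        has_integral of_real (pochhammer a j / fact j * sin_power_integral (2*p - 1 + 2 * real j)) * z ^ j) {0..pi}"
      using p by (intro has_integral_mult_left has_integral_of_real has_integral_mult_right
          has_integral_sin_power_integral) auto
    then show "(g j has_integral of_real (pochhammer a j / fact j * sin_power_integral (2*p - 1 + 2 * real j)) * z ^ j) {0..pi}"
      by (rule has_integral_eq[rotated]) (simp add: eq)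
    fix t assume t: "t \<in> {0..pi}"
    have "norm (g j t) = sin t powr (2*p - 1) * (norm (c j) * (norm z * (sin t)\<^sup>2) ^ j)"
      by (simp add: g_def norm_mult norm_power)
    also have "\<dots> \<le> 1 * (norm (c j) * (norm z * 1) ^ j)"
      using t p sin_ge_zero[of t] powr_mono2[of "2*p - 1" "sin t" 1]
      by (intro mult_mono mult_left_mono power_mono) (auto simp: abs_square_le_1)
    finally show "norm (g j t) \<le> norm (c j * z ^ j)"
      by (simp add: norm_mult norm_power)
  qed
  also have "integral {0..pi} (\<lambda>t. \<Sum>j. g j t) = euler_integral p a z"
    unfolding euler_integral_def
  proof (rule integral_cong)
    fix t :: real
    have "norm z * (sin t)\<^sup>2 \<le> norm z"
      by (intro mult_left_le) (auto simp: abs_square_le_1)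
    then have "norm (z * of_real ((sin t)\<^sup>2)) < 1"
      using z by (simp add: norm_mult del: of_real_power)
    then show "(\<Sum>j. g j t) = of_real (sin t powr (2*p - 1)) * (1 - z * of_real ((sin t)\<^sup>2)) powr of_real (- a)"
      unfolding g_def c_def by (intro sums_unique[symmetric] sums_mult pochhammer_binomial_sums)
  qed
  finally show ?thesis .
qed

lemma hyp2F1_eq_euler_integral:
  assumes p: "p > 1/2" and z: "z \<in> cut_plane"
  shows "hyp2F1 (of_real a) (of_real p) (of_real (p + 1/2)) z
           = euler_integral p a z / of_real (sin_power_integral (2*p - 1))"
proof (rule hyp2F1_eqI[OF _ _ z])
  define I where "I = sin_power_integral (2*p - 1)"
  have I: "I > 0"
    unfolding I_def using p by (rule sin_power_integral_pos)
  show "(\<lambda>z. euler_integral p a z / of_real I) holomorphic_on cut_plane"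
    using holomorphic_euler_integral[OF p] I by (intro holomorphic_intros) auto
  fix w :: complex
  assume w: "norm w < 1"
  have "(\<lambda>j. of_real (pochhammer a j / fact j * sin_power_integral (2*p - 1 + 2 * real j)) * w ^ j / of_real I)
      sums (euler_integral p a w / of_real I)"
    by (intro sums_divide euler_integral_sums p w)
  moreover have "of_real (pochhammer a j / fact j * sin_power_integral (2*p - 1 + 2 * real j)) * w ^ j / of_real I
      = pochhammer (of_real a) j * pochhammer (of_real p) j / (pochhammer (of_real (p + 1/2)) j * fact j) * w ^ j"
    for j
    using I pochhammer_pos[of "p + 1/2" j] p
    unfolding sin_power_integral_pochhammer[OF p] pochhammer_of_real I_def
    by (simp add: field_simps)
  ultimately show "euler_integral p a w / of_real I = hyp2F1_series (of_real a) (of_real p) (of_real (p + 1/2)) w"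
    unfolding hyp2F1_series_def by (simp add: sums_iff)
qed

definition euler_integral_real :: "real \<Rightarrow> real \<Rightarrow> real \<Rightarrow> real" where
  "euler_integral_real p a x = integral {0..pi} (\<lambda>t. sin t powr (2*p - 1) * (1 - x * (sin t)\<^sup>2) powr (- a))"

lemma one_minus_mult_sin_sq_pos:
  assumes "x < (1::real)"
  shows "1 - x * (sin t)\<^sup>2 > 0"
proof (cases "x \<le> 0")
  case False
  then have "x * (sin t)\<^sup>2 \<le> x"
    by (intro mult_left_le) (auto simp: abs_square_le_1)
  with assms show ?thesis
    by simp
qed (use mult_nonpos_nonneg[of x "(sin t)\<^sup>2"] in simp)

lemma has_integral_euler_integral_real:
  assumes "p > 1/2" "x < 1"
  shows "((\<lambda>t. sin t powr (2*p - 1) * (1 - x * (sin t)\<^sup>2) powr (- a)) has_integral euler_integral_real p a x) {0..pi}"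
proof -
  have "continuous_on {0..pi} (\<lambda>t. (1 - x * (sin t)\<^sup>2) powr (- a))"
    using one_minus_mult_sin_sq_pos[OF assms(2)] by (intro continuous_intros) (auto simp: less_imp_neq[symmetric])
  then have "continuous_on {0..pi} (\<lambda>t. sin t powr (2*p - 1) * (1 - x * (sin t)\<^sup>2) powr (- a))"
    using assms(1) by (intro continuous_on_mult continuous_on_sin_powr) auto
  then show ?thesis
    unfolding euler_integral_real_def using integrable_continuous_interval by blast
qed

lemma euler_integral_of_real:
  assumes p: "p > 1/2" and x: "x < 1"
  shows "euler_integral p a (of_real x) = of_real (euler_integral_real p a x)"
proof -
  have "complex_of_real (sin t powr (2*p - 1) * (1 - x * (sin t)\<^sup>2) powr (- a))
      = of_real (sin t powr (2*p - 1)) * (1 - of_real x * of_real ((sin t)\<^sup>2)) powr of_real (- a)" for t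
  proof -
    have "(1 - of_real x * of_real ((sin t)\<^sup>2)) powr of_real (- a)
        = complex_of_real (1 - x * (sin t)\<^sup>2) powr of_real (- a)"
      by simp
    also have "\<dots> = of_real ((1 - x * (sin t)\<^sup>2) powr (- a))"
      using one_minus_mult_sin_sq_pos[OF x, of t] by (intro powr_of_real) simp
    finally show ?thesis
      by simp
  qed
  then show ?thesis
    unfolding euler_integral_def
    using has_integral_of_real[OF has_integral_euler_integral_real[OF assms, of a], where 'b=complex]
    by (intro integral_unique) (simp only: )
qed

lemma hyp2F1_of_real_eq_euler_integral_real:
  assumes "p > 1/2" "x < 1"
  shows "hyp2F1 (of_real a) (of_real p) (of_real (p + 1/2)) (of_real x)
           = of_real (euler_integral_real p a x / sin_power_integral (2*p - 1))"
proof -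
  have "of_real x \<in> cut_plane"
    using assms(2) by (simp add: cut_plane_def)
  then show ?thesis
    using hyp2F1_eq_euler_integral[OF assms(1), of _ a] euler_integral_of_real[OF assms, of a] by simp
qed

section \<open>Gaussian, Gamma and radial integrals\<close>

lemma nn_integral_gaussian_real:
  assumes x: "x > (0::real)"
  shows "(\<integral>\<^sup>+y. ennreal (exp (- x * y\<^sup>2)) \<partial>lborel) = ennreal (sqrt (pi / x))"
proof -
  define \<sigma> where "\<sigma> = 1 / sqrt (2 * x)"
  have \<sigma>: "\<sigma> > 0" "2 * \<sigma>\<^sup>2 = 1 / x"
    using x by (simp_all add: \<sigma>_def power_divide)
  have "exp (- x * y\<^sup>2) = sqrt (pi / x) * normal_density 0 \<sigma> y" for y
  proof -
    have "sqrt (2 * pi * \<sigma>\<^sup>2) = sqrt (pi / x)"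
      using \<sigma>(2) by (simp add: mult.assoc[symmetric] mult.commute[of 2 pi] mult.assoc)
    moreover have "- (y\<^sup>2) / (2 * \<sigma>\<^sup>2) = - x * y\<^sup>2"
      unfolding \<sigma>(2) using x by simp
    ultimately show ?thesis
      using x by (simp add: normal_density_def)
  qed
  then have "(\<integral>\<^sup>+y. ennreal (exp (- x * y\<^sup>2)) \<partial>lborel)
      = ennreal (sqrt (pi / x)) * (\<integral>\<^sup>+y. ennreal (normal_density 0 \<sigma> y) \<partial>lborel)"
    using x by (subst nn_integral_cmult[symmetric]) (auto simp: ennreal_mult)
  also have "(\<integral>\<^sup>+y. ennreal (normal_density 0 \<sigma> y) \<partial>lborel) = 1"
    using \<sigma>(1) by (subst nn_integral_eq_integral) (auto simp: integral_normal_density)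
  finally show ?thesis
    by simp
qed

lemma nn_integral_gaussian:
  assumes x: "x > (0::real)"
  shows "(\<integral>\<^sup>+(h::'a::euclidean_space). ennreal (exp (- x * (norm h)\<^sup>2)) \<partial>lborel)
           = ennreal ((pi / x) powr (DIM('a) / 2))"
proof -
  have "exp (- x * (norm h)\<^sup>2) = (\<Prod>b\<in>Basis. exp (- x * (h \<bullet> b)\<^sup>2))" for h :: 'a
  proof -
    have "(norm h)\<^sup>2 = (\<Sum>b\<in>Basis. (h \<bullet> b)\<^sup>2)"
      unfolding power2_norm_eq_inner by (subst euclidean_inner) (simp add: power2_eq_square)
    then show ?thesis
      by (simp add: sum_distrib_left exp_sum)
  qed
  then have "(\<integral>\<^sup>+(h::'a). ennreal (exp (- x * (norm h)\<^sup>2)) \<partial>lborel)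
      = (\<integral>\<^sup>+(h::'a). (\<Prod>b\<in>Basis. ennreal (exp (- x * (h \<bullet> b)\<^sup>2))) \<partial>lborel)"
    by (simp add: prod_ennreal)
  also have "\<dots> = (\<Prod>b\<in>(Basis::'a set). \<integral>\<^sup>+y. ennreal (exp (- x * y\<^sup>2)) \<partial>lborel)"
    by (rule nn_integral_lborel_prod) auto
  also have "\<dots> = ennreal (sqrt (pi / x) ^ DIM('a))"
    using nn_integral_gaussian_real[OF x] x by (simp add: ennreal_power)
  also have "sqrt (pi / x) ^ DIM('a) = (pi / x) powr (DIM('a) / 2)"
    using x by (simp add: sqrt_def root_powr_inverse powr_realpow[symmetric] powr_powr)
  finally show ?thesis .
qed

lemma ennreal_eq_mult_imp_eq_divide:
  fixes x :: ennreal
  assumes c: "c > 0" and eq: "ennreal a = ennreal c * x"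
  shows "x = ennreal (a / c)"
proof -
  have "x = ennreal (1 / c) * (ennreal c * x)"
    using c by (simp add: mult.assoc[symmetric] flip: ennreal_mult')
  also have "\<dots> = ennreal (a / c)"
    using c by (simp add: eq[symmetric] flip: ennreal_mult')
  finally show ?thesis .
qed

lemma nn_integral_Gamma_scaled:
  assumes q: "q > 0" and c: "c > (0::real)"
  shows "(\<integral>\<^sup>+x. ennreal (indicator {0..} x * x powr (q - 1) * exp (- c * x)) \<partial>lborel)
           = ennreal (Gamma q / c powr q)"
proof (rule ennreal_eq_mult_imp_eq_divide)
  have "ennreal (Gamma q)
      = ennreal c * (\<integral>\<^sup>+x. ennreal (indicator {0..} (c * x) * (c * x) powr (q - 1) / exp (c * x)) \<partial>lborel)"
    using Gamma_conv_nn_integral_real[OF q] c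
      nn_integral_real_affine[of "\<lambda>y. ennreal (indicator {0..} y * y powr (q - 1) / exp y)" c 0]
    by simp
  also have "(\<integral>\<^sup>+x. ennreal (indicator {0..} (c * x) * (c * x) powr (q - 1) / exp (c * x)) \<partial>lborel)
      = (\<integral>\<^sup>+x. ennreal (c powr (q - 1)) * ennreal (indicator {0..} x * x powr (q - 1) * exp (- c * x)) \<partial>lborel)"
  proof (intro nn_integral_cong)
    fix x :: real
    show "ennreal (indicator {0..} (c * x) * (c * x) powr (q - 1) / exp (c * x))
        = ennreal (c powr (q - 1)) * ennreal (indicator {0..} x * x powr (q - 1) * exp (- c * x))"
    proof (cases "x \<ge> 0")
      case True
      then have "indicator {0..} (c * x) * (c * x) powr (q - 1) / exp (c * x)
          = c powr (q - 1) * (indicator {0..} x * x powr (q - 1) * exp (- c * x))"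
        using c by (simp add: powr_mult exp_minus field_simps)
      then show ?thesis
        using c by (simp add: ennreal_mult')
    next
      case False
      then show ?thesis
        using c by (simp add: indicator_def zero_le_mult_iff)
    qed
  qed
  also have "\<dots> = ennreal (c powr (q - 1))
      * (\<integral>\<^sup>+x. ennreal (indicator {0..} x * x powr (q - 1) * exp (- c * x)) \<partial>lborel)"
    by (rule nn_integral_cmult) simp
  finally show "ennreal (Gamma q)
      = ennreal (c powr q) * (\<integral>\<^sup>+x. ennreal (indicator {0..} x * x powr (q - 1) * exp (- c * x)) \<partial>lborel)"
    using c by (simp add: mult.assoc[symmetric] powr_diff flip: ennreal_mult')
qed (use c in simp)

lemma nn_integral_gaussian_Gamma_kernel:
  assumes c: "c > (0::real)"
  shows "(\<integral>\<^sup>+(h::'a::euclidean_space). ennreal (indicator {0..} x * x powr (s - 1) * exp (- (c + (norm h)\<^sup>2) * x)) \<partial>lborel)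
           = ennreal (pi powr (DIM('a) / 2) * (indicator {0..} x * x powr (s - DIM('a) / 2 - 1) * exp (- c * x)))"
proof (cases "x > 0")
  case True
  have "ennreal (indicator {0..} x * x powr (s - 1) * exp (- (c + (norm h)\<^sup>2) * x))
      = ennreal (x powr (s - 1) * exp (- c * x)) * ennreal (exp (- x * (norm h)\<^sup>2))" for h :: 'a
    using True by (simp add: indicator_def exp_add[symmetric] algebra_simps flip: ennreal_mult')
  then have "(\<integral>\<^sup>+(h::'a). ennreal (indicator {0..} x * x powr (s - 1) * exp (- (c + (norm h)\<^sup>2) * x)) \<partial>lborel)
      = ennreal (x powr (s - 1) * exp (- c * x)) * ennreal ((pi / x) powr (DIM('a) / 2))"
    using nn_integral_gaussian[OF True, where 'a='a] by (simp add: nn_integral_cmult)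
  also have "\<dots> = ennreal (pi powr (DIM('a) / 2) * (indicator {0..} x * x powr (s - DIM('a) / 2 - 1) * exp (- c * x)))"
  proof -
    have "x powr (s - 1) = x powr (s - DIM('a) / 2 - 1) * x powr (DIM('a) / 2)"
      by (simp flip: powr_add)
    then show ?thesis
      using True by (simp add: powr_divide field_simps flip: ennreal_mult')
  qed
  finally show ?thesis .
qed (auto simp: indicator_def)

lemma nn_integral_radial_powr:
  assumes c: "c > (0::real)" and s: "s > DIM('a) / 2"
  shows "(\<integral>\<^sup>+(h::'a::euclidean_space). ennreal ((c + (norm h)\<^sup>2) powr - s) \<partial>lborel)
           = ennreal (pi powr (DIM('a) / 2) * Gamma (s - DIM('a) / 2) / Gamma s * c powr (DIM('a) / 2 - s))"
proof -
  define F where "F h x = ennreal (indicator {0..} x * x powr (s - 1) * exp (- (c + (norm h)\<^sup>2) * x))"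
    for h :: 'a and x :: real
  have s0: "s > 0"
    by (rule less_trans[OF _ s]) simp
  have meas: "case_prod F \<in> borel_measurable (lborel \<Otimes>\<^sub>M lborel)"
    unfolding F_def by measurable
  have subordination: "ennreal ((c + (norm h)\<^sup>2) powr - s) = ennreal (1 / Gamma s) * (\<integral>\<^sup>+x. F h x \<partial>lborel)" for h
    using s0 c Gamma_real_pos[OF s0, THEN less_imp_neq] unfolding F_def
    by (subst nn_integral_Gamma_scaled) (auto simp: add_pos_nonneg powr_minus_divide simp flip: ennreal_mult')
  have "(\<integral>\<^sup>+(h::'a). ennreal ((c + (norm h)\<^sup>2) powr - s) \<partial>lborel)
      = (\<integral>\<^sup>+h. ennreal (1 / Gamma s) * (\<integral>\<^sup>+x. F h x \<partial>lborel) \<partial>lborel)"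
    by (intro nn_integral_cong subordination)
  also have "\<dots> = ennreal (1 / Gamma s) * (\<integral>\<^sup>+h. (\<integral>\<^sup>+x. F h x \<partial>lborel) \<partial>lborel)"
    by (rule nn_integral_cmult) (rule lborel.borel_measurable_nn_integral[OF meas])
  also have "(\<integral>\<^sup>+h. (\<integral>\<^sup>+x. F h x \<partial>lborel) \<partial>lborel) = (\<integral>\<^sup>+x. (\<integral>\<^sup>+h. F h x \<partial>lborel) \<partial>lborel)"
    by (rule lborel_pair.Fubini'[OF meas, symmetric])
  also have "\<dots> = (\<integral>\<^sup>+x. ennreal (pi powr (DIM('a) / 2))
      * ennreal (indicator {0..} x * x powr (s - DIM('a) / 2 - 1) * exp (- c * x)) \<partial>lborel)"
    unfolding F_def
    by (intro nn_integral_cong) (subst nn_integral_gaussian_Gamma_kernel[OF c], rule ennreal_mult', simp)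
  also have "\<dots> = ennreal (pi powr (DIM('a) / 2)) * ennreal (Gamma (s - DIM('a) / 2) / c powr (s - DIM('a) / 2))"
    using s c nn_integral_Gamma_scaled[of "s - DIM('a) / 2" c] by (simp add: nn_integral_cmult)
  also have "ennreal (1 / Gamma s) * (ennreal (pi powr (DIM('a) / 2)) * ennreal (Gamma (s - DIM('a) / 2) / c powr (s - DIM('a) / 2)))
      = ennreal (pi powr (DIM('a) / 2) * Gamma (s - DIM('a) / 2) / Gamma s * c powr (DIM('a) / 2 - s))"
  proof -
    have "c powr (DIM('a) / 2 - s) = 1 / c powr (s - DIM('a) / 2)"
      using powr_minus_divide[of c "s - DIM('a) / 2"] by simp
    then show ?thesis
      using Gamma_real_pos[OF s0] by (simp add: ennreal_mult'[symmetric] mult_ac)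
  qed
  finally show ?thesis .
qed

lemma nn_integral_lborel_translate:
  fixes c :: "'a::euclidean_space" and f :: "'a \<Rightarrow> ennreal"
  assumes [measurable]: "f \<in> borel_measurable borel"
  shows "(\<integral>\<^sup>+h. f (h - c) \<partial>lborel) = (\<integral>\<^sup>+h. f h \<partial>lborel)"
proof -
  have "(\<integral>\<^sup>+h. f (h - c) \<partial>lborel) = (\<integral>\<^sup>+h. f (h - c) \<partial>distr lborel borel ((+) c))"
    by (simp only: lborel_distr_plus)
  also have "\<dots> = (\<integral>\<^sup>+h. f h \<partial>lborel)"
    by (subst nn_integral_distr) auto
  finally show ?thesis .
qed

section \<open>Feynman parametrisation\<close>

lemma feynman_integrand_eq:
  fixes t A B :: real
  assumes t: "t \<in> {0..1}" and A: "A > 0" and B: "B > 0"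
  defines "D \<equiv> t * A + (1 - t) * B"
  shows "(t * A / D) powr (\<alpha> - 1) * (1 - t * A / D) powr (\<beta> - 1) * (A * B / D\<^sup>2)
           = A powr \<alpha> * B powr \<beta> * (t powr (\<alpha> - 1) * (1 - t) powr (\<beta> - 1) * D powr - (\<alpha> + \<beta>))"
proof (cases "t = 0 \<or> t = 1")
  case False
  with t have t: "0 < t" "t < 1"
    by auto
  with A B have D: "D > 0"
    by (simp add: D_def add_pos_pos)
  then have "1 - t * A / D = (1 - t) * B / D"
    by (simp add: D_def field_simps)
  moreover have "(t * A / D) powr (\<alpha> - 1) = t powr (\<alpha> - 1) * A powr (\<alpha> - 1) / D powr (\<alpha> - 1)"
    "((1 - t) * B / D) powr (\<beta> - 1) = (1 - t) powr (\<beta> - 1) * B powr (\<beta> - 1) / D powr (\<beta> - 1)"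
    using t A B D by (simp_all add: powr_divide powr_mult)
  moreover have "A powr \<alpha> = A powr (\<alpha> - 1) * A" "B powr \<beta> = B powr (\<beta> - 1) * B"
    using A B powr_add[of A "\<alpha> - 1" 1] powr_add[of B "\<beta> - 1" 1] by simp_all
  moreover have "D powr - (\<alpha> + \<beta>) = 1 / (D powr (\<alpha> - 1) * D powr (\<beta> - 1) * D\<^sup>2)"
    using D powr_add[of D "\<alpha> - 1 + (\<beta> - 1)" 2] powr_add[of D "\<alpha> - 1" "\<beta> - 1"]
      powr_minus_divide[of D "\<alpha> + \<beta>"] by simp
  ultimately show ?thesis
    using t A B D by (simp only:) (simp add: field_simps)
qed (use A in \<open>auto simp: D_def\<close>)

lemma feynman_parametrization:
  assumes A: "A > 0" and B: "B > 0" and \<alpha>: "\<alpha> > 0" and \<beta>: "\<beta> > 0"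
  shows "(\<integral>\<^sup>+t. ennreal (indicator {0..1} t * (t powr (\<alpha> - 1) * (1 - t) powr (\<beta> - 1))
                          * (t * A + (1 - t) * B) powr - (\<alpha> + \<beta>)) \<partial>lborel)
           = ennreal (Beta \<alpha> \<beta> / (A powr \<alpha> * B powr \<beta>))"
proof (rule ennreal_eq_mult_imp_eq_divide)
  define D where "D t = t * A + (1 - t) * B" for t
  define f where "f s = s powr (\<alpha> - 1) * (1 - s) powr (\<beta> - 1)" for s :: real
  define g where "g t = t * A / D t" for t
  define g' where "g' t = A * B / (D t)\<^sup>2" for t
  have D: "D t > 0" if "t \<in> {0..1}" for t
    using that A B by (cases "t = 0") (auto simp: D_def intro: add_pos_nonneg)
  have g: "g 0 = 0" "g 1 = 1"
    using A by (simp_all add: g_def D_def)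
  have "ennreal (Beta \<alpha> \<beta>) = (\<integral>\<^sup>+s. ennreal (f s * indicator {g 0..g 1} s) \<partial>lborel)"
    unfolding g f_def using \<alpha> \<beta>
    by (subst nn_integral_has_integral_lebesgue[OF _ has_integral_Beta_real, symmetric])
       (auto simp: mult.commute)
  also have "\<dots> = (\<integral>\<^sup>+t. ennreal (f (g t) * g' t * indicator {0..1} t) \<partial>lborel)"
  proof (rule nn_integral_substitution)
    fix t :: real assume "t \<in> {0..1}"
    with D[of t] show "(g has_real_derivative g' t) (at t)"
      unfolding g_def g'_def D_def
      by (auto intro!: derivative_eq_intros simp: power2_eq_square field_simps)
  next
    have "continuous_on {0..1} D"
      unfolding D_def by (intro continuous_intros)
    then show "continuous_on {0..1} g'"
      unfolding g'_def using D by (intro continuous_intros) (auto simp: less_imp_neq[symmetric])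
  qed (use A B in \<open>auto simp: f_def g'_def set_borel_measurable_def\<close>)
  also have "\<dots> = (\<integral>\<^sup>+t. ennreal (A powr \<alpha> * B powr \<beta>) * ennreal (indicator {0..1} t
      * (t powr (\<alpha> - 1) * (1 - t) powr (\<beta> - 1)) * (t * A + (1 - t) * B) powr - (\<alpha> + \<beta>)) \<partial>lborel)"
  proof (intro nn_integral_cong)
    fix t :: real
    have "f (g t) * g' t = A powr \<alpha> * B powr \<beta> * (t powr (\<alpha> - 1) * (1 - t) powr (\<beta> - 1) * D t powr - (\<alpha> + \<beta>))"
      if "t \<in> {0..1}"
      using feynman_integrand_eq[OF that A B] by (simp add: f_def g_def g'_def D_def)
    then show "ennreal (f (g t) * g' t * indicator {0..1} t) = ennreal (A powr \<alpha> * B powr \<beta>) * ennreal (indicator {0..1} t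
      * (t powr (\<alpha> - 1) * (1 - t) powr (\<beta> - 1)) * (t * A + (1 - t) * B) powr - (\<alpha> + \<beta>))"
      by (cases "t \<in> {0..1}") (auto simp: D_def ennreal_mult' mult_ac)
  qed
  also have "\<dots> = ennreal (A powr \<alpha> * B powr \<beta>) * (\<integral>\<^sup>+t. ennreal (indicator {0..1} t
      * (t powr (\<alpha> - 1) * (1 - t) powr (\<beta> - 1)) * (t * A + (1 - t) * B) powr - (\<alpha> + \<beta>)) \<partial>lborel)"
    by (rule nn_integral_cmult) simp
  finally show "ennreal (Beta \<alpha> \<beta>) = ennreal (A powr \<alpha> * B powr \<beta>) * (\<integral>\<^sup>+t. ennreal (indicator {0..1} t
      * (t powr (\<alpha> - 1) * (1 - t) powr (\<beta> - 1)) * (t * A + (1 - t) * B) powr - (\<alpha> + \<beta>)) \<partial>lborel)" .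
qed (use A B in simp)

section \<open>The convolution\<close>

lemma norm_sq_convex_combination:
  fixes k h :: "'a::real_inner"
  shows "t * (1 + (norm (k - h))\<^sup>2) + (1 - t) * (1 + (norm h)\<^sup>2)
           = 1 + t * (1 - t) * (norm k)\<^sup>2 + (norm (h - t *\<^sub>R k))\<^sup>2"
  unfolding power2_norm_eq_inner
  by (simp add: inner_diff_left inner_diff_right inner_commute algebra_simps power2_eq_square)

lemma nn_integral_feynman_denominator:
  fixes k :: "'a::euclidean_space"
  assumes t: "t \<in> {0..1}" and s: "s > DIM('a) / 2"
  shows "(\<integral>\<^sup>+h. ennreal ((t * (1 + (norm (k - h))\<^sup>2) + (1 - t) * (1 + (norm h)\<^sup>2)) powr - s) \<partial>lborel)
           = ennreal (pi powr (DIM('a) / 2) * Gamma (s - DIM('a) / 2) / Gamma s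
                      * (1 + t * (1 - t) * (norm k)\<^sup>2) powr (DIM('a) / 2 - s))"
proof -
  define c where "c = 1 + t * (1 - t) * (norm k)\<^sup>2"
  have c: "c > 0"
    using t by (auto simp: c_def intro!: add_pos_nonneg)
  have "(\<integral>\<^sup>+h. ennreal ((t * (1 + (norm (k - h))\<^sup>2) + (1 - t) * (1 + (norm h)\<^sup>2)) powr - s) \<partial>lborel)
      = (\<integral>\<^sup>+h. ennreal ((c + (norm (h - t *\<^sub>R k))\<^sup>2) powr - s) \<partial>lborel)"
    by (simp add: norm_sq_convex_combination c_def)
  also have "\<dots> = (\<integral>\<^sup>+(h::'a). ennreal ((c + (norm h)\<^sup>2) powr - s) \<partial>lborel)"
    by (rule nn_integral_lborel_translate[where f = "\<lambda>h. ennreal ((c + (norm h)\<^sup>2) powr - s)"]) simp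
  also have "\<dots> = ennreal (pi powr (DIM('a) / 2) * Gamma (s - DIM('a) / 2) / Gamma s * c powr (DIM('a) / 2 - s))"
    using c s by (rule nn_integral_radial_powr)
  finally show ?thesis
    unfolding c_def .
qed

lemma conv_G_nd_eq_nn_integral:
  fixes k :: "real ^ 'd"
  shows "conv (G_nd n) (G_nd n) k = enn2real (\<integral>\<^sup>+h. ennreal (G_nd n (k - h) * G_nd n h) \<partial>lborel)"
  unfolding conv_def by (rule integral_eq_nn_integral) (auto simp: G_nd_def)

lemma nn_integral_G_nd_product:
  fixes k :: "real ^ 'd"
  assumes n: "n > 0"
  shows "(\<integral>\<^sup>+h. ennreal (G_nd n (k - h) * G_nd n h) \<partial>lborel)
           = ennreal (1 / Beta n n) * (\<integral>\<^sup>+t. ennreal (indicator {0..1} t * (t * (1 - t)) powr (n - 1))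
               * (\<integral>\<^sup>+h. ennreal ((t * (1 + (norm (k - h))\<^sup>2) + (1 - t) * (1 + (norm h)\<^sup>2)) powr - (n + n)) \<partial>lborel)
             \<partial>lborel)"
proof -
  define w where "w t = indicator {0..1} t * (t * (1 - t)) powr (n - 1)" for t :: real
  define D where "D h t = t * (1 + (norm (k - h))\<^sup>2) + (1 - t) * (1 + (norm h)\<^sup>2)" for h t
  define F where "F h t = ennreal (w t) * ennreal (D h t powr - (n + n))" for h t
  have meas: "case_prod F \<in> borel_measurable (lborel \<Otimes>\<^sub>M lborel)"
    unfolding F_def w_def D_def by measurable
  have "ennreal (G_nd n (k - h) * G_nd n h) = ennreal (1 / Beta n n) * (\<integral>\<^sup>+t. F h t \<partial>lborel)" for h
  proof -
    have w_eq: "w t = indicator {0..1} t * (t powr (n - 1) * (1 - t) powr (n - 1))" for t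
      unfolding w_def by (cases "t \<in> {0..1}") (simp_all add: powr_mult)
    have "F h t = ennreal (indicator {0..1} t * (t powr (n - 1) * (1 - t) powr (n - 1)) * D h t powr - (n + n))" for t
      unfolding F_def w_eq by (rule ennreal_mult'[symmetric]) simp
    then have "(\<integral>\<^sup>+t. F h t \<partial>lborel) = ennreal (Beta n n / ((1 + (norm (k - h))\<^sup>2) powr n * (1 + (norm h)\<^sup>2) powr n))"
      unfolding D_def using n by (simp only:) (intro feynman_parametrization, auto intro: add_pos_nonneg)
    moreover have "Beta n n > 0"
      using n by (simp add: Beta_def)
    ultimately show ?thesis
      by (simp add: G_nd_def powr_minus_divide flip: ennreal_mult')
  qed
  then have "(\<integral>\<^sup>+h. ennreal (G_nd n (k - h) * G_nd n h) \<partial>lborel)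
      = ennreal (1 / Beta n n) * (\<integral>\<^sup>+h. (\<integral>\<^sup>+t. F h t \<partial>lborel) \<partial>lborel)"
    by (simp only:) (rule nn_integral_cmult, rule lborel.borel_measurable_nn_integral[OF meas])
  also have "(\<integral>\<^sup>+h. (\<integral>\<^sup>+t. F h t \<partial>lborel) \<partial>lborel) = (\<integral>\<^sup>+t. (\<integral>\<^sup>+h. F h t \<partial>lborel) \<partial>lborel)"
    by (rule lborel_pair.Fubini'[OF meas, symmetric])
  also have "\<dots> = (\<integral>\<^sup>+t. ennreal (w t) * (\<integral>\<^sup>+h. ennreal (D h t powr - (n + n)) \<partial>lborel) \<partial>lborel)"
    unfolding F_def D_def by (intro nn_integral_cong nn_integral_cmult) measurable
  finally show ?thesis
    unfolding w_def D_def mult_2 .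
qed

lemma nn_integral_G_nd_product_radial:
  fixes k :: "real ^ 'd" and n :: real
  assumes n: "n > real CARD('d) / 2"
  defines "a \<equiv> 2*n - real CARD('d) / 2"
  shows "(\<integral>\<^sup>+h. ennreal (G_nd n (k - h) * G_nd n h) \<partial>lborel)
           = ennreal (1 / Beta n n) * (ennreal (pi powr (real CARD('d) / 2) * Gamma a / Gamma (2*n))
               * (\<integral>\<^sup>+t. ennreal (indicator {0..1} t * (t * (1 - t)) powr (n - 1)
                                   * (1 + (norm k)\<^sup>2 * (t * (1 - t))) powr - a) \<partial>lborel))"
proof -
  have "ennreal (indicator {0..1} t * (t * (1 - t)) powr (n - 1))
      * (\<integral>\<^sup>+h. ennreal ((t * (1 + (norm (k - h))\<^sup>2) + (1 - t) * (1 + (norm h)\<^sup>2)) powr - (2*n)) \<partial>lborel)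
      = ennreal (pi powr (real CARD('d) / 2) * Gamma a / Gamma (2*n))
      * ennreal (indicator {0..1} t * (t * (1 - t)) powr (n - 1) * (1 + (norm k)\<^sup>2 * (t * (1 - t))) powr - a)" for t
  proof (cases "t \<in> {0..1}")
    case True
    with n show ?thesis
      by (simp add: nn_integral_feynman_denominator a_def mult_ac flip: ennreal_mult')
  qed simp
  moreover have "n > 0"
    by (rule less_trans[OF _ n]) simp
  ultimately show ?thesis
    by (simp add: nn_integral_G_nd_product nn_integral_cmult)
qed

lemma conv_G_nd_self:
  fixes k :: "real ^ 'd" and n :: real
  assumes n: "n > real CARD('d) / 2"
  defines "a \<equiv> 2*n - real CARD('d) / 2"
  shows "conv (G_nd n) (G_nd n) k = pi powr (real CARD('d) / 2) * Gamma a / Gamma (2*n)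
           * euler_integral_real n a (- ((norm k)\<^sup>2 / 4)) / sin_power_integral (2*n - 1)"
proof -
  have n1: "n > 1/2"
    using n zero_less_card_finite[where 'a='d] by linarith
  have x: "- ((norm k)\<^sup>2 / 4) < 1"
    using zero_le_power2[of "norm k"] by linarith
  define C where "C = pi powr (real CARD('d) / 2) * Gamma a / Gamma (2*n)"
  define I where "I = sin_power_integral (2*n - 1)"
  define E where "E = euler_integral_real n a (- ((norm k)\<^sup>2 / 4))"
  have pos: "C > 0" "I > 0" "E \<ge> 0"
    using n n1 sin_power_integral_pos[OF n1]
      has_integral_nonneg[OF has_integral_euler_integral_real[OF n1 x, of a]]
    by (auto simp: C_def I_def E_def a_def)
  have "(\<integral>\<^sup>+t. ennreal (indicator {0..1} t * (t * (1 - t)) powr (n - 1)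
                         * (1 + (norm k)\<^sup>2 * (t * (1 - t))) powr - a) \<partial>lborel)
      = ennreal (2 powr (1 - 2*n)) * (\<integral>\<^sup>+\<theta>. ennreal (indicator {0..pi} \<theta> * sin \<theta> powr (2*n - 1)
                         * (1 + (norm k)\<^sup>2 * ((sin \<theta>)\<^sup>2 / 4)) powr - a) \<partial>lborel)"
    by (rule nn_integral_sin_substitution[where \<phi> = "\<lambda>y. (1 + (norm k)\<^sup>2 * y) powr - a"]) measurable
  also have "(\<integral>\<^sup>+\<theta>. ennreal (indicator {0..pi} \<theta> * sin \<theta> powr (2*n - 1)
                         * (1 + (norm k)\<^sup>2 * ((sin \<theta>)\<^sup>2 / 4)) powr - a) \<partial>lborel) = ennreal E"
  proof -
    have "(1 + (norm k)\<^sup>2 * ((sin \<theta>)\<^sup>2 / 4)) powr - a = (1 - - ((norm k)\<^sup>2 / 4) * (sin \<theta>)\<^sup>2) powr - a" for \<theta>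
      by (simp add: algebra_simps)
    moreover have "(\<integral>\<^sup>+\<theta>. ennreal (indicator {0..pi} \<theta>
        * (sin \<theta> powr (2*n - 1) * (1 - - ((norm k)\<^sup>2 / 4) * (sin \<theta>)\<^sup>2) powr - a)) \<partial>lborel) = ennreal E"
      unfolding E_def by (rule nn_integral_has_integral_lebesgue[OF _ has_integral_euler_integral_real[OF n1 x]]) simp
    ultimately show ?thesis
      by (simp add: mult.assoc)
  qed
  finally have "(\<integral>\<^sup>+h. ennreal (G_nd n (k - h) * G_nd n h) \<partial>lborel)
      = ennreal (1 / Beta n n) * (ennreal C * (ennreal (2 powr (1 - 2*n)) * ennreal E))"
    unfolding nn_integral_G_nd_product_radial[OF n] C_def a_def by simp
  also have "\<dots> = ennreal (C * E / I)"
    using pos unfolding Beta_eq_sin_power_integral[OF n1] I_def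
    by (simp add: field_simps flip: ennreal_mult')
  finally have "conv (G_nd n) (G_nd n) k = C * E / I"
    using pos by (simp add: conv_G_nd_eq_nn_integral)
  then show ?thesis
    unfolding C_def E_def I_def .
qed

lemma two_pi_power_eq_powr:
  "(2 * pi) ^ m = (4 * pi) powr (real m / 2) * pi powr (real m / 2)"
proof -
  have "(4 * pi) powr (real m / 2) * pi powr (real m / 2) = ((2 * pi) powr 2) powr (real m / 2)"
    by (simp add: powr_mult[symmetric] powr_numeral power2_eq_square mult_ac)
  also have "\<dots> = (2 * pi) powr (2 * (real m / 2))"
    by (rule powr_powr)
  also have "\<dots> = (2 * pi) ^ m"
    by (simp add: powr_realpow)
  finally show ?thesis ..
qed

theorem lemma4p2:
  fixes n :: real and k :: "real ^ 'd"
  assumes "n > real CARD('d) / 2"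
  shows "complex_of_real ((1 + norm k ^ 2) powr n / (2*pi) ^ CARD('d)
            * conv (G_nd n) (G_nd n) k)
         = S_nd n CARD('d) (norm k ^ 2 / 4)"
proof -
  define a where "a = 2*n - real CARD('d) / 2"
  define E where "E = euler_integral_real n a (- (norm k ^ 2 / 4))"
  define I where "I = sin_power_integral (2*n - 1)"
  have n: "n > 1/2"
    using assms zero_less_card_finite[where 'a='d] by linarith
  have x: "- (norm k ^ 2 / 4) < 1"
    using zero_le_power2[of "norm k"] by linarith
  have "I > 0" "Gamma (2*n) > 0"
    using sin_power_integral_pos[OF n] n by (simp_all add: I_def)
  moreover have "conv (G_nd n) (G_nd n) k = pi powr (real CARD('d) / 2) * Gamma a / Gamma (2*n) * E / I"
    using conv_G_nd_self[OF assms] by (simp add: a_def E_def I_def)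
  moreover have "hyp2F1 (of_real a) (of_real n) (of_real (n + 1/2)) (of_real (- (norm k ^ 2 / 4)))
      = of_real (E / I)"
    unfolding E_def I_def using n x by (rule hyp2F1_of_real_eq_euler_integral_real)
  ultimately show ?thesis
    unfolding S_nd_def a_def[symmetric] two_pi_power_eq_powr
    by (simp add: field_simps flip: of_real_mult of_real_divide)
qed

end
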